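(* Let $G_1$ and $G_2$ be OPERA DAGs with $G_1\sim G_2$, and let $x,y$ be events contained in both. Then $\mathrm{forklessCause}(x,y)$ holds in $G_1$ if and only if $\mathrm{forklessCause}(x,y)$ holds in $G_2$.
   Context: An OPERA DAG is a finite directed acyclic graph whose vertices are events. Each event $v$ has a creator $cr(v)$ among a fixed finite set of validators. Each validator $i$ has a stake weight $w_i>0$, and $W=\sum_i w_i$. An edge $(u,v)$ means that $u$ references $v$ as a parent, and $u$ is a descendant of $v$ if $v$ is reachable from $u$. For an event $v$, $G[v]$ is the subgraph induced on $v$ together with all its ancestors. $G_1\sim G_2$ means $G_1[v]=G_2[v]$ for every event $v$ in both DAGs. A fork is a pair of distinct events with the same creator, neither of which is an ancestor of the other. A validator is a cheater in a subgraph if that subgraph contains a fork created by it. QUORUM is $Q = 2W/3+1$. $\mathrm{forklessCause}(x,y)$ means: the subgraph $G[x]$ contains no fork created by $cr(y)$, and the non-cheater validators (with respect to $G[x]$) that have an event in $G[x]$ having $y$ as an ancestor-or-self have total weight at least $Q$. The set of validators and their weights are the same for both DAGs. *)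

theory Defs
  imports Complex_Main
begin

text \<open>An OPERA DAG: a finite set of events, a parent-reference relation
  (edge (u,v): u references v as a parent), and a creator labelling.\<close>
record ('e, 'v) dag =
  events  :: "'e set"
  edges   :: "('e \<times> 'e) set"
  creator :: "'e \<Rightarrow> 'v"

definition opera_dag :: "'v set \<Rightarrow> ('e, 'v) dag \<Rightarrow> bool" where
  "opera_dag Vals G \<longleftrightarrow> finite (events G) \<and> edges G \<subseteq> events G \<times> events G
     \<and> acyclic (edges G) \<and> creator G ` events G \<subseteq> Vals"

definition anc_self :: "('e, 'v) dag \<Rightarrow> 'e \<Rightarrow> 'e set" where
  "anc_self G v = {a. (v, a) \<in> (edges G)\<^sup>*}"

definition sub :: "('e, 'v) dag \<Rightarrow> 'e \<Rightarrow> ('e, 'v) dag" where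
  "sub G v = \<lparr> events = anc_self G v,
               edges = edges G \<inter> (anc_self G v \<times> anc_self G v),
               creator = (\<lambda>e. if e \<in> anc_self G v then creator G e else undefined) \<rparr>"

definition dag_sim :: "('e, 'v) dag \<Rightarrow> ('e, 'v) dag \<Rightarrow> bool" where
  "dag_sim G1 G2 \<longleftrightarrow> (\<forall>v \<in> events G1 \<inter> events G2. sub G1 v = sub G2 v)"

definition is_fork :: "('e, 'v) dag \<Rightarrow> 'e \<Rightarrow> 'e \<Rightarrow> bool" where
  "is_fork G a b \<longleftrightarrow> a \<in> events G \<and> b \<in> events G \<and> a \<noteq> b
     \<and> creator G a = creator G b
     \<and> (a, b) \<notin> (edges G)\<^sup>* \<and> (b, a) \<notin> (edges G)\<^sup>*"

definition cheater :: "('e, 'v) dag \<Rightarrow> 'v \<Rightarrow> bool" where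
  "cheater G i \<longleftrightarrow> (\<exists>a b. is_fork G a b \<and> creator G a = i)"

definition quorum :: "'v set \<Rightarrow> ('v \<Rightarrow> real) \<Rightarrow> real" where
  "quorum Vals w = 2 * (\<Sum>i\<in>Vals. w i) / 3 + 1"

definition forklessCause ::
  "'v set \<Rightarrow> ('v \<Rightarrow> real) \<Rightarrow> ('e, 'v) dag \<Rightarrow> 'e \<Rightarrow> 'e \<Rightarrow> bool" where
  "forklessCause Vals w G x y \<longleftrightarrow>
     \<not> cheater (sub G x) (creator G y) \<and>
     (\<Sum>i\<in>{i \<in> Vals. \<not> cheater (sub G x) i \<and>
          (\<exists>e \<in> events (sub G x). creator (sub G x) e = i \<and> (e, y) \<in> (edges (sub G x))\<^sup>*)}. w i)
       \<ge> quorum Vals w"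

end

theory Submission
  imports Defs
begin

text \<open>forklessCause x y inspects the DAG only through the subgraph G[x] and the creator
  of y, and the creator of y is already recorded in G[y]. Both subgraphs agree in
  G1 and G2 because G1 \<sim> G2.\<close>

lemma creator_sub_self: "creator (sub G v) v = creator G v"
  by (simp add: sub_def anc_self_def)

lemma dag_sim_sub_eq:
  assumes "dag_sim G1 G2" and "v \<in> events G1" and "v \<in> events G2"
  shows "sub G1 v = sub G2 v"
  using assms unfolding dag_sim_def by blast

lemma forklessCause_cong:
  assumes "sub G1 x = sub G2 x" and "creator G1 y = creator G2 y"
  shows "forklessCause Vals w G1 x y \<longleftrightarrow> forklessCause Vals w G2 x y"
  unfolding forklessCause_def assms ..

theorem mainTheorem2:
  fixes Vals :: "'v set" and w :: "'v \<Rightarrow> real"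
    and G1 G2 :: "('e, 'v) dag" and x y :: 'e
  assumes "finite Vals" and "\<forall>i \<in> Vals. w i > 0"
    and "opera_dag Vals G1" and "opera_dag Vals G2"
    and "dag_sim G1 G2"
    and "x \<in> events G1" and "x \<in> events G2"
    and "y \<in> events G1" and "y \<in> events G2"
  shows "forklessCause Vals w G1 x y \<longleftrightarrow> forklessCause Vals w G2 x y"
proof (rule forklessCause_cong)
  show "sub G1 x = sub G2 x"
    using dag_sim_sub_eq assms(5-7) .
  have "sub G1 y = sub G2 y"
    using dag_sim_sub_eq assms(5,8,9) .
  then show "creator G1 y = creator G2 y"
    by (metis creator_sub_self)
qed

end
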